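(* Let $U\subset\mathbb{R}^n$ be a bounded domain with smooth boundary and let $(u_1,u_2)\in C(\overline U)^2$ be a viscosity solution of the system (S) in $U$. Then for every $y\in U$ and $i\in\{1,2\}$, the limits $S_i^+(y)=\lim_{r\to0^+}S_i^+(y,r)$ and $S_i^-(y)=\lim_{r\to0^+}S_i^-(y,r)$ exist and satisfy $S_i^+(y)=-S_i^-(y)$.
   Context: For $\varphi\in C^2$ near $x$, set $\Delta_\infty\varphi(x)=|D\varphi(x)|^{-2}\sum_{k,l=1}^n\varphi_{x_k}\varphi_{x_l}\varphi_{x_kx_l}(x)$ when $D\varphi(x)\neq0$. Define $\Delta_\infty^+\varphi(x)=\Delta_\infty\varphi(x)$ if $D\varphi(x)\ne0$ and $\Delta_\infty^+\varphi(x)=\max\{D^2\varphi(x)v\cdot v: v\in\mathbb{S}^{n-1}\}$ if $D\varphi(x)=0$; define $\Delta_\infty^-\varphi(x)$ in the same way with $\min$ in place of $\max$. The system (S) on an open set $\Omega$ is: $-\Delta_\infty u_1+u_1-u_2=0$ and $-\Delta_\infty u_2+u_2-u_1=0$ in $\Omega$. A pair $(u_1,u_2)$ of upper semicontinuous functions on $\Omega$ is a viscosity subsolution of (S) in $\Omega$ if for each $i\in\{1,2\}$, $j=3-i$, and each $\varphi\in C^2(\Omega)$ such that $u_i-\varphi$ has a local maximum at $x_0\in\Omega$, one has $-\Delta_\infty^+\varphi(x_0)+u_i(x_0)-u_j(x_0)\le0$. A pair of lower semicontinuous functions on $\Omega$ is a viscosity supersolution if for each $i$, $j=3-i$, and each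 $\varphi\in C^2(\Omega)$ such that $u_i-\varphi$ has a local minimum at $x_0\in\Omega$, one has $-\Delta_\infty^-\varphi(x_0)+u_i(x_0)-u_j(x_0)\ge0$. A viscosity solution is a pair that is both a subsolution and a supersolution. For $y\in U$, $r>0$ with $\overline B(y,r)\subset U$: $S_i^+(y,r)=\frac{\max_{|z-y|=r}u_i(z)-u_i(y)}{r}$ and $S_i^-(y,r)=\frac{\min_{|z-y|=r}u_i(z)-u_i(y)}{r}$. *)

theory Defs
  imports "HOL-Analysis.Analysis"
begin

fun Ck_on :: "nat \<Rightarrow> 'a::euclidean_space set \<Rightarrow> ('a \<Rightarrow> real) \<Rightarrow> bool" where
  "Ck_on 0 S f = continuous_on S f"
| "Ck_on (Suc k) S f =
     (f differentiable_on S \<and> (\<forall>v. Ck_on k S (\<lambda>x. frechet_derivative f (at x) v)))"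

definition smooth_on :: "'a::euclidean_space set \<Rightarrow> ('a \<Rightarrow> real) \<Rightarrow> bool" where
  "smooth_on S f \<longleftrightarrow> (\<forall>k. Ck_on k S f)"

definition grad :: "('a::euclidean_space \<Rightarrow> real) \<Rightarrow> 'a \<Rightarrow> 'a" where
  "grad f x = (\<Sum>b\<in>Basis. frechet_derivative f (at x) b *\<^sub>R b)"

definition hessq :: "('a::euclidean_space \<Rightarrow> real) \<Rightarrow> 'a \<Rightarrow> 'a \<Rightarrow> real" where
  "hessq f x v = frechet_derivative (\<lambda>y. frechet_derivative f (at y) v) (at x) v"

definition inf_lap :: "('a::euclidean_space \<Rightarrow> real) \<Rightarrow> 'a \<Rightarrow> real" where
  "inf_lap f x = hessq f x (grad f x) / (norm (grad f x))\<^sup>2"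

definition inf_lap_plus :: "('a::euclidean_space \<Rightarrow> real) \<Rightarrow> 'a \<Rightarrow> real" where
  "inf_lap_plus f x =
     (if grad f x \<noteq> 0 then inf_lap f x else (SUP v\<in>sphere 0 1. hessq f x v))"

definition inf_lap_minus :: "('a::euclidean_space \<Rightarrow> real) \<Rightarrow> 'a \<Rightarrow> real" where
  "inf_lap_minus f x =
     (if grad f x \<noteq> 0 then inf_lap f x else (INF v\<in>sphere 0 1. hessq f x v))"

definition usc_on :: "'a::metric_space set \<Rightarrow> ('a \<Rightarrow> real) \<Rightarrow> bool" where
  "usc_on S u \<longleftrightarrow> (\<forall>x\<in>S. \<forall>a. u x < a \<longrightarrow> (\<exists>e>0. \<forall>y\<in>S. dist y x < e \<longrightarrow> u y < a))"

definition lsc_on :: "'a::metric_space set \<Rightarrow> ('a \<Rightarrow> real) \<Rightarrow> bool" where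
  "lsc_on S u \<longleftrightarrow> (\<forall>x\<in>S. \<forall>a. a < u x \<longrightarrow> (\<exists>e>0. \<forall>y\<in>S. dist y x < e \<longrightarrow> a < u y))"

definition local_max_on :: "'a::metric_space set \<Rightarrow> ('a \<Rightarrow> real) \<Rightarrow> 'a \<Rightarrow> bool" where
  "local_max_on S g x0 \<longleftrightarrow> x0 \<in> S \<and> (\<exists>e>0. \<forall>x\<in>S. dist x x0 < e \<longrightarrow> g x \<le> g x0)"

definition local_min_on :: "'a::metric_space set \<Rightarrow> ('a \<Rightarrow> real) \<Rightarrow> 'a \<Rightarrow> bool" where
  "local_min_on S g x0 \<longleftrightarrow> x0 \<in> S \<and> (\<exists>e>0. \<forall>x\<in>S. dist x x0 < e \<longrightarrow> g x0 \<le> g x)"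

definition visc_sub_comp :: "'a::euclidean_space set \<Rightarrow> ('a \<Rightarrow> real) \<Rightarrow> ('a \<Rightarrow> real) \<Rightarrow> bool" where
  "visc_sub_comp \<Omega> ui uj \<longleftrightarrow>
     (\<forall>\<phi> x0. Ck_on 2 \<Omega> \<phi> \<longrightarrow> local_max_on \<Omega> (\<lambda>x. ui x - \<phi> x) x0 \<longrightarrow>
        - inf_lap_plus \<phi> x0 + ui x0 - uj x0 \<le> 0)"

definition visc_super_comp :: "'a::euclidean_space set \<Rightarrow> ('a \<Rightarrow> real) \<Rightarrow> ('a \<Rightarrow> real) \<Rightarrow> bool" where
  "visc_super_comp \<Omega> ui uj \<longleftrightarrow>
     (\<forall>\<phi> x0. Ck_on 2 \<Omega> \<phi> \<longrightarrow> local_min_on \<Omega> (\<lambda>x. ui x - \<phi> x) x0 \<longrightarrow>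
        - inf_lap_minus \<phi> x0 + ui x0 - uj x0 \<ge> 0)"

definition visc_subsolution :: "'a::euclidean_space set \<Rightarrow> ('a \<Rightarrow> real) \<Rightarrow> ('a \<Rightarrow> real) \<Rightarrow> bool" where
  "visc_subsolution \<Omega> u1 u2 \<longleftrightarrow> usc_on \<Omega> u1 \<and> usc_on \<Omega> u2 \<and>
     visc_sub_comp \<Omega> u1 u2 \<and> visc_sub_comp \<Omega> u2 u1"

definition visc_supersolution :: "'a::euclidean_space set \<Rightarrow> ('a \<Rightarrow> real) \<Rightarrow> ('a \<Rightarrow> real) \<Rightarrow> bool" where
  "visc_supersolution \<Omega> u1 u2 \<longleftrightarrow> lsc_on \<Omega> u1 \<and> lsc_on \<Omega> u2 \<and>
     visc_super_comp \<Omega> u1 u2 \<and> visc_super_comp \<Omega> u2 u1"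

definition visc_solution :: "'a::euclidean_space set \<Rightarrow> ('a \<Rightarrow> real) \<Rightarrow> ('a \<Rightarrow> real) \<Rightarrow> bool" where
  "visc_solution \<Omega> u1 u2 \<longleftrightarrow> visc_subsolution \<Omega> u1 u2 \<and> visc_supersolution \<Omega> u1 u2"

definition smooth_boundary :: "'a::euclidean_space set \<Rightarrow> bool" where
  "smooth_boundary U \<longleftrightarrow> (\<forall>p\<in>frontier U. \<exists>V \<psi>. open V \<and> p \<in> V \<and> smooth_on V \<psi> \<and>
      (\<forall>x\<in>V. grad \<psi> x \<noteq> 0) \<and> U \<inter> V = {x\<in>V. \<psi> x < 0})"

definition S_plus :: "('a::euclidean_space \<Rightarrow> real) \<Rightarrow> 'a \<Rightarrow> real \<Rightarrow> real" where
  "S_plus u y r = ((SUP z\<in>sphere y r. u z) - u y) / r"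

definition S_minus :: "('a::euclidean_space \<Rightarrow> real) \<Rightarrow> 'a \<Rightarrow> real \<Rightarrow> real" where
  "S_minus u y r = ((INF z\<in>sphere y r. u z) - u y) / r"

end

theory Submission
  imports Defs
begin

(* Since u_1 - u_2 is bounded by some M on U, each component u = u_i satisfies
   -Delta_oo u <= M and -Delta_oo (-u) <= M in the viscosity sense.  We only test these
   inequalities against the regularised quadratic cones
       phi(x) = a + b sqrt(|x - z|^2 + e) - k |x - z|^2,
   whose infinity Laplacian is computed explicitly (b e / (|x - z|^2 + e)^(3/2) - 2 k).
   This yields comparison with the cones  u(z) + b |x - z| - K |x - z|^2  from above
   for every K > M/2, and from it:
     (1) S^+(z, r) >= -K r  and  S^+(z, r) <= S^+(z, s) + 3 K s  for r < s
         ("almost monotone"), so lim_{r->0+} S^+(y, r) exists;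
     (2) a two-scale estimate around the minimum point of u on the sphere of radius r,
         giving  lim S^+(-u)(y, .) <= lim S^+(u)(y, .);
   applying (2) also to -u gives equality, and S^-(u) = -S^+(-u) finishes the proof. *)

definition cone_rad :: "real \<Rightarrow> 'a::real_inner \<Rightarrow> 'a \<Rightarrow> real" where
  "cone_rad e z x = sqrt ((x - z) \<bullet> (x - z) + e)"

definition reg_cone :: "real \<Rightarrow> real \<Rightarrow> real \<Rightarrow> real \<Rightarrow> 'a::real_inner \<Rightarrow> 'a \<Rightarrow> real" where
  "reg_cone a b k e z x = a + b * cone_rad e z x - k * ((x - z) \<bullet> (x - z))"

(* Its gradient is cone_slope b k e z x * (x - z). *)
definition cone_slope :: "real \<Rightarrow> real \<Rightarrow> real \<Rightarrow> 'a::real_inner \<Rightarrow> 'a \<Rightarrow> real" where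
  "cone_slope b k e z x = b / cone_rad e z x - 2 * k"

lemma cone_rad_radicand_pos: "e > 0 \<Longrightarrow> (x - z) \<bullet> (x - z) + e > 0"
  by (simp add: add_nonneg_pos)

lemma cone_rad_radicand_nonzero: "e > 0 \<Longrightarrow> (x - z) \<bullet> (x - z) + e \<noteq> 0"
  using cone_rad_radicand_pos[of e x z] by simp

lemma cone_rad_pos: "e > 0 \<Longrightarrow> cone_rad e z x > 0"
  unfolding cone_rad_def by (simp add: cone_rad_radicand_pos)

lemma cone_rad_dist: "cone_rad e z x = sqrt ((dist x z)\<^sup>2 + e)"
  by (simp add: cone_rad_def dist_norm power2_norm_eq_inner)

lemma reg_cone_dist: "reg_cone a b k e z x = a + b * sqrt ((dist x z)\<^sup>2 + e) - k * (dist x z)\<^sup>2"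
  by (simp add: reg_cone_def cone_rad_dist dist_norm power2_norm_eq_inner)

lemma cone_rad_has_derivative:
  assumes "e > 0"
  shows "(cone_rad e z has_derivative (\<lambda>v. ((x - z) \<bullet> v) / cone_rad e z x)) (at x)"
  using cone_rad_radicand_pos[OF assms, of x z] unfolding cone_rad_def
  by (auto intro!: derivative_eq_intros simp: inner_commute field_simps)

lemma reg_cone_has_derivative:
  assumes "e > 0"
  shows "(reg_cone a b k e z has_derivative (\<lambda>v. cone_slope b k e z x * ((x - z) \<bullet> v))) (at x)"
  unfolding reg_cone_def [abs_def]
  by (rule derivative_eq_intros cone_rad_has_derivative[OF assms] refl)+
     (simp add: cone_slope_def inner_commute algebra_simps diff_divide_distrib)

lemma reg_cone_directional_has_derivative:
  assumes "e > 0"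
  shows "((\<lambda>x. cone_slope b k e z x * ((x - z) \<bullet> v)) has_derivative
     (\<lambda>w. - b / (cone_rad e z x)^3 * ((x - z) \<bullet> w) * ((x - z) \<bullet> v)
           + cone_slope b k e z x * (w \<bullet> v))) (at x)"
  using cone_rad_pos[OF assms, of z x]
  unfolding cone_slope_def [abs_def]
  by (auto intro!: derivative_eq_intros cone_rad_has_derivative[OF assms]
      simp: power3_eq_cube field_simps)

lemma frechet_derivative_reg_cone:
  "e > 0 \<Longrightarrow> frechet_derivative (reg_cone a b k e z) (at x) =
     (\<lambda>v. cone_slope b k e z x * ((x - z) \<bullet> v))"
  by (metis frechet_derivative_at reg_cone_has_derivative)

lemma directional_derivative_reg_cone:
  "e > 0 \<Longrightarrow> (\<lambda>x. frechet_derivative (reg_cone a b k e z) (at x) v) =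
     (\<lambda>x. cone_slope b k e z x * ((x - z) \<bullet> v))"
  by (simp add: frechet_derivative_reg_cone)

lemma grad_reg_cone:
  assumes "e > 0"
  shows "grad (reg_cone a b k e z) x = cone_slope b k e z x *\<^sub>R (x - z)"
proof -
  have "grad (reg_cone a b k e z) x = (\<Sum>i\<in>Basis. (cone_slope b k e z x * ((x - z) \<bullet> i)) *\<^sub>R i)"
    unfolding grad_def frechet_derivative_reg_cone[OF assms] ..
  also have "\<dots> = cone_slope b k e z x *\<^sub>R (\<Sum>i\<in>Basis. ((x - z) \<bullet> i) *\<^sub>R i)"
    by (simp add: scaleR_sum_right)
  also have "\<dots> = cone_slope b k e z x *\<^sub>R (x - z)"
    by (simp add: euclidean_representation)
  finally show ?thesis .
qed

lemma hessq_reg_cone: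
  assumes "e > 0"
  shows "hessq (reg_cone a b k e z) x v =
     - b / (cone_rad e z x)^3 * ((x - z) \<bullet> v)\<^sup>2 + cone_slope b k e z x * (v \<bullet> v)"
  unfolding hessq_def directional_derivative_reg_cone[OF assms]
    frechet_derivative_at[OF reg_cone_directional_has_derivative[OF assms], symmetric]
  by (simp add: power2_eq_square)

lemma continuous_on_cone_slope: "e > 0 \<Longrightarrow> continuous_on S (cone_slope b k e z)"
  unfolding cone_slope_def cone_rad_def [abs_def]
  by (intro continuous_intros) (simp_all add: cone_rad_radicand_nonzero)

lemma C2_reg_cone:
  assumes "e > 0"
  shows "Ck_on 2 S (reg_cone a b k e z)"
proof -
  have "\<forall>v w. continuous_on S (\<lambda>x. - b / (cone_rad e z x)^3 * ((x - z) \<bullet> w) * ((x - z) \<bullet> v)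
           + cone_slope b k e z x * (w \<bullet> v))"
    using assms unfolding cone_rad_def [abs_def]
    by (auto intro!: continuous_intros continuous_on_cone_slope simp: cone_rad_radicand_nonzero)
  then show ?thesis
    unfolding numeral_2_eq_2 Ck_on.simps directional_derivative_reg_cone[OF assms]
      frechet_derivative_at[OF reg_cone_directional_has_derivative[OF assms], symmetric]
    using reg_cone_has_derivative[OF assms] reg_cone_directional_has_derivative[OF assms]
    by (auto intro!: differentiable_at_imp_differentiable_on differentiableI)
qed

lemma reg_cone_radial_curvature:
  assumes e: "e > 0"
  shows "- b / (cone_rad e z x)^3 * ((x - z) \<bullet> (x - z)) + cone_slope b k e z x
           = b * e / (cone_rad e z x)^3 - 2 * k"
proof -
  define r where "r = cone_rad e z x"
  define Q where "Q = (x - z) \<bullet> (x - z)"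
  have r: "r > 0" "r\<^sup>2 = Q + e"
    using cone_rad_pos[OF e, of z x] cone_rad_radicand_pos[OF e, of x z]
    by (simp_all add: r_def Q_def cone_rad_def)
  have "b / r = b * r\<^sup>2 / r^3"
    using r(1) by (simp add: power2_eq_square power3_eq_cube)
  then have "b / r = (b * Q + b * e) / r^3"
    by (simp only: r(2) distrib_left)
  then show ?thesis
    unfolding cone_slope_def r_def[symmetric] Q_def[symmetric] by (simp add: add_divide_distrib)
qed

(* At the vertex the Hessian is a multiple of the identity. *)
lemma inf_lap_reg_cone_vertex:
  assumes e: "e > 0"
  shows "inf_lap_plus (reg_cone a b k e z) z = b * e / (cone_rad e z z)^3 - 2 * k"
    and "inf_lap_minus (reg_cone a b k e z) z = b * e / (cone_rad e z z)^3 - 2 * k"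
proof -
  have hess: "hessq (reg_cone a b k e z) z v = b * e / (cone_rad e z z)^3 - 2 * k"
    if "v \<in> sphere 0 1" for v
    using that reg_cone_radial_curvature[OF e, of b z z k]
    by (simp add: hessq_reg_cone[OF e] dot_square_norm)
  have "sphere (0::'a) 1 \<noteq> {}"
    by simp
  then show "inf_lap_plus (reg_cone a b k e z) z = b * e / (cone_rad e z z)^3 - 2 * k"
    and "inf_lap_minus (reg_cone a b k e z) z = b * e / (cone_rad e z z)^3 - 2 * k"
    unfolding inf_lap_plus_def inf_lap_minus_def grad_reg_cone[OF e]
    by (simp_all only: SUP_cong[OF refl hess] INF_cong[OF refl hess])
       (simp_all add: cSUP_const cINF_const)
qed

(* Away from critical points the gradient is parallel to x - z, so only the radial second
   derivative contributes. *)
lemma inf_lap_reg_cone_noncritical: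
  assumes e: "e > 0" and c: "cone_slope b k e z x \<noteq> 0" and "x \<noteq> z"
  shows "inf_lap_plus (reg_cone a b k e z) x = b * e / (cone_rad e z x)^3 - 2 * k"
    and "inf_lap_minus (reg_cone a b k e z) x = b * e / (cone_rad e z x)^3 - 2 * k"
proof -
  define c where "c = cone_slope b k e z x"
  define Q where "Q = (x - z) \<bullet> (x - z)"
  have "Q \<noteq> 0"
    using \<open>x \<noteq> z\<close> by (simp add: Q_def)
  have "(x - z) \<bullet> (c *\<^sub>R (x - z)) = c * Q" "(c *\<^sub>R (x - z)) \<bullet> (c *\<^sub>R (x - z)) = c\<^sup>2 * Q"
    by (simp_all add: Q_def power2_eq_square)
  then have "hessq (reg_cone a b k e z) x (c *\<^sub>R (x - z)) = c\<^sup>2 * Q * (- b / (cone_rad e z x)^3 * Q + c)"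
    unfolding hessq_reg_cone[OF e] c_def[symmetric] by (simp add: power2_eq_square algebra_simps)
  moreover have "(norm (c *\<^sub>R (x - z)))\<^sup>2 = c\<^sup>2 * Q"
    by (simp add: Q_def power2_norm_eq_inner power_mult_distrib)
  ultimately have "inf_lap (reg_cone a b k e z) x = - b / (cone_rad e z x)^3 * Q + c"
    using c \<open>Q \<noteq> 0\<close> by (simp add: inf_lap_def grad_reg_cone[OF e] c_def)
  then have "inf_lap (reg_cone a b k e z) x = b * e / (cone_rad e z x)^3 - 2 * k"
    using reg_cone_radial_curvature[OF e] by (simp add: c_def Q_def)
  then show "inf_lap_plus (reg_cone a b k e z) x = b * e / (cone_rad e z x)^3 - 2 * k"
    and "inf_lap_minus (reg_cone a b k e z) x = b * e / (cone_rad e z x)^3 - 2 * k"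
    using c \<open>x \<noteq> z\<close> by (simp_all add: inf_lap_plus_def inf_lap_minus_def grad_reg_cone[OF e])
qed

lemma inf_lap_reg_cone:
  assumes e: "e > 0" and noncrit: "x = z \<or> cone_slope b k e z x \<noteq> 0"
  shows "inf_lap_plus (reg_cone a b k e z) x = b * e / (cone_rad e z x)^3 - 2 * k"
    and "inf_lap_minus (reg_cone a b k e z) x = b * e / (cone_rad e z x)^3 - 2 * k"
proof -
  have "inf_lap_plus (reg_cone a b k e z) x = b * e / (cone_rad e z x)^3 - 2 * k
      \<and> inf_lap_minus (reg_cone a b k e z) x = b * e / (cone_rad e z x)^3 - 2 * k"
  proof (cases "x = z")
    case True
    then show ?thesis
      using inf_lap_reg_cone_vertex[OF e, of a b k z] by simp
  next
    case False
    then have "cone_slope b k e z x \<noteq> 0"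
      using noncrit by simp
    then show ?thesis
      using inf_lap_reg_cone_noncritical[OF e _ False, where a=a and b=b and k=k] by simp
  qed
  then show "inf_lap_plus (reg_cone a b k e z) x = b * e / (cone_rad e z x)^3 - 2 * k"
    and "inf_lap_minus (reg_cone a b k e z) x = b * e / (cone_rad e z x)^3 - 2 * k"
    by simp_all
qed

(* u satisfies  -Delta_oo u <= M  in U when tested against regularised cones touching from
   above (at points where the cone is not critical, or at its vertex). *)
definition cone_subsolution :: "'a::euclidean_space set \<Rightarrow> ('a \<Rightarrow> real) \<Rightarrow> real \<Rightarrow> bool" where
  "cone_subsolution U u M \<longleftrightarrow>
     (\<forall>a b k e z p. e > 0 \<longrightarrow> (p = z \<or> cone_slope b k e z p \<noteq> 0) \<longrightarrow>
        local_max_on U (\<lambda>x. u x - reg_cone a b k e z x) p \<longrightarrow>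
        - M \<le> b * e / (cone_rad e z p)^3 - 2 * k)"

lemma cone_subsolution_if_visc_sub_comp:
  assumes sub: "visc_sub_comp U u v" and bound: "\<forall>x\<in>U. v x - u x \<le> M"
  shows "cone_subsolution U u M"
  unfolding cone_subsolution_def
proof (intro allI impI)
  fix a b k e z p
  assume e: "(e::real) > 0" and noncrit: "p = z \<or> cone_slope b k e z p \<noteq> 0"
    and max: "local_max_on U (\<lambda>x. u x - reg_cone a b k e z x) p"
  have "- inf_lap_plus (reg_cone a b k e z) p + u p - v p \<le> 0"
    using sub C2_reg_cone[OF e] max unfolding visc_sub_comp_def by blast
  moreover have "v p - u p \<le> M"
    using bound max by (simp add: local_max_on_def)
  ultimately show "- M \<le> b * e / (cone_rad e z p)^3 - 2 * k"
    using inf_lap_reg_cone(1)[OF e noncrit] by simp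
qed

lemma reg_cone_uminus: "reg_cone (- a) (- b) (- k) e z x = - reg_cone a b k e z x"
  by (simp add: reg_cone_def)

lemma cone_subsolution_if_visc_super_comp:
  assumes super: "visc_super_comp U u v" and bound: "\<forall>x\<in>U. u x - v x \<le> M"
  shows "cone_subsolution U (\<lambda>x. - u x) M"
  unfolding cone_subsolution_def
proof (intro allI impI)
  fix a b k e z p
  assume e: "(e::real) > 0" and noncrit: "p = z \<or> cone_slope b k e z p \<noteq> 0"
    and max: "local_max_on U (\<lambda>x. - u x - reg_cone a b k e z x) p"
  have noncrit': "p = z \<or> cone_slope (- b) (- k) e z p \<noteq> 0"
    using noncrit by (auto simp: cone_slope_def)
  have "local_min_on U (\<lambda>x. u x - reg_cone (- a) (- b) (- k) e z x) p"
    using max unfolding local_max_on_def local_min_on_def reg_cone_uminus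
    by (smt (verit, best))
  then have "- inf_lap_minus (reg_cone (- a) (- b) (- k) e z) p + u p - v p \<ge> 0"
    using super C2_reg_cone[OF e] unfolding visc_super_comp_def by blast
  moreover have "u p - v p \<le> M"
    using bound max by (simp add: local_max_on_def)
  ultimately show "- M \<le> b * e / (cone_rad e z p)^3 - 2 * k"
    using inf_lap_reg_cone(2)[OF e noncrit'] by simp
qed

lemma local_max_in_open_part:
  fixes f :: "'a::metric_space \<Rightarrow> real"
  assumes "compact C" "continuous_on C f" "x0 \<in> C"
    and "open V" "V \<subseteq> C" "V \<subseteq> U" and boundary: "\<forall>x\<in>C - V. f x < f x0"
  shows "\<exists>x1\<in>V. local_max_on U f x1"
proof -
  obtain x1 where x1: "x1 \<in> C" "\<forall>x\<in>C. f x \<le> f x1"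
    using continuous_attains_sup[OF assms(1) _ assms(2)] assms(3) by blast
  have "x1 \<in> V"
    using x1 boundary assms(3) by (meson DiffI leD)
  then obtain \<epsilon> where "\<epsilon> > 0" "ball x1 \<epsilon> \<subseteq> V"
    using \<open>open V\<close> open_contains_ball by blast
  then have "local_max_on U f x1"
    using x1 \<open>x1 \<in> V\<close> assms(5,6) unfolding local_max_on_def
    by (metis dist_commute mem_ball subsetD)
  then show ?thesis
    using \<open>x1 \<in> V\<close> by blast
qed

lemma cone_subsolution_touch:
  assumes sub: "cone_subsolution U u M" and e: "e > 0"
    and max: "local_max_on U (\<lambda>x. u x - reg_cone a b k e z x) p"
    and steep: "2 * k * cone_rad e z p < b"
  shows "2 * k - M \<le> b * e / (cone_rad e z p)^3"
proof -
  have "cone_slope b k e z p > 0"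
    using steep cone_rad_pos[OF e, of z p] by (simp add: cone_slope_def pos_less_divide_eq)
  then have "- M \<le> b * e / (cone_rad e z p)^3 - 2 * k"
    using sub e max unfolding cone_subsolution_def by (metis less_irrefl)
  then show ?thesis
    by simp
qed

lemma cone_comparison_on_annulus:
  fixes u :: "'a::euclidean_space \<Rightarrow> real"
  assumes sub: "cone_subsolution U u M" and cont: "continuous_on U u"
    and ball: "cball z \<rho> \<subseteq> U" and "0 < \<delta>" and "0 \<le> K" and e: "0 < e" and "0 < b"
    and steep: "2 * K * sqrt (\<rho>\<^sup>2 + e) < b" and flat: "b * e < (2 * K - M) * \<delta>^3"
    and boundary: "\<forall>y. dist y z = \<delta> \<or> dist y z = \<rho> \<longrightarrow> u y \<le> reg_cone a b K e z y"
    and x: "\<delta> \<le> dist x z" "dist x z \<le> \<rho>"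
  shows "u x \<le> reg_cone a b K e z x"
proof (rule ccontr)
  assume above: "\<not> ?thesis"
  define f where "f = (\<lambda>y. u y - reg_cone a b K e z y)"
  define C where "C = cball z \<rho> - ball z \<delta>"
  define V where "V = ball z \<rho> - cball z \<delta>"
  have "continuous_on C f"
    unfolding f_def using ball C2_reg_cone[OF e, of C a b K z]
    by (intro continuous_on_diff continuous_on_subset[OF cont])
       (auto simp: C_def numeral_2_eq_2 differentiable_imp_continuous_on)
  moreover have "f y < f x" if "y \<in> C - V" for y
  proof -
    have "dist y z = \<delta> \<or> dist y z = \<rho>"
      using that by (auto simp: C_def V_def dist_commute)
    then show ?thesis
      using boundary above by (force simp: f_def)
  qed
  moreover have "x \<in> C" "V \<subseteq> C" "V \<subseteq> U"
    using x ball by (auto simp: C_def V_def dist_commute)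
  ultimately obtain p where p: "p \<in> V" and max: "local_max_on U f p"
    using local_max_in_open_part[of C f x V U] unfolding C_def V_def
    by (metis compact_cball compact_diff open_ball open_Diff closed_cball)
  define s where "s = cone_rad e z p"
  have "\<delta> < s"
    using p real_le_rsqrt[of "dist p z" "(dist p z)\<^sup>2 + e"] e
    by (simp add: s_def cone_rad_dist V_def dist_commute)
  moreover have "s \<le> sqrt (\<rho>\<^sup>2 + e)"
    using p \<open>0 < \<delta>\<close> by (simp add: s_def cone_rad_dist V_def dist_commute power_mono)
  ultimately have "2 * K * s < b"
    using steep \<open>0 \<le> K\<close> by (smt (verit) mult_left_mono)
  then have "2 * K - M \<le> b * e / s^3"
    using cone_subsolution_touch[OF sub e] max by (simp add: f_def s_def)
  moreover have "0 < (2 * K - M) * \<delta>^3"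
    using flat \<open>0 < b\<close> e by (smt (verit) mult_pos_pos)
  then have "(2 * K - M) * \<delta>^3 \<le> (2 * K - M) * s^3"
    using \<open>\<delta> < s\<close> \<open>0 < \<delta>\<close>
    by (intro mult_left_mono power_mono) (auto simp: zero_less_mult_iff)
  ultimately show False
    using flat \<open>\<delta> < s\<close> \<open>0 < \<delta>\<close> by (simp add: le_divide_eq)
qed

lemma reg_cone_bounds:
  assumes "0 \<le> b" "0 \<le> e"
  shows "a + b * dist x z - k * (dist x z)\<^sup>2 \<le> reg_cone a b k e z x"
    and "reg_cone a b k e z x \<le> a + b * (dist x z + sqrt e) - k * (dist x z)\<^sup>2"
proof -
  have "dist x z \<le> sqrt ((dist x z)\<^sup>2 + e)"
    using assms by (simp add: real_le_rsqrt)
  moreover have "sqrt ((dist x z)\<^sup>2 + e) \<le> dist x z + sqrt e"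
    using sqrt_add_le_add_sqrt[of "(dist x z)\<^sup>2" e] assms by simp
  ultimately show "a + b * dist x z - k * (dist x z)\<^sup>2 \<le> reg_cone a b k e z x"
    and "reg_cone a b k e z x \<le> a + b * (dist x z + sqrt e) - k * (dist x z)\<^sup>2"
    using assms by (simp_all add: reg_cone_dist mult_left_mono)
qed

lemma small_sphere_below:
  fixes u :: "'a::metric_space \<Rightarrow> real"
  assumes cont: "continuous_on U u" and ball: "cball z d \<subseteq> U" and "0 < d" "0 < \<theta>"
  shows "\<exists>\<delta>. 0 < \<delta> \<and> \<delta> < d \<and> (\<forall>y. dist y z = \<delta> \<longrightarrow> u y < u z + \<theta>)"
proof -
  have "z \<in> U"
    using ball \<open>0 < d\<close> by auto
  then obtain \<delta>' where "0 < \<delta>'" and \<delta>': "\<forall>y\<in>U. dist y z < \<delta>' \<longrightarrow> dist (u y) (u z) < \<theta>"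
    using cont \<open>0 < \<theta>\<close> unfolding continuous_on_iff by blast
  define \<delta> where "\<delta> = min (\<delta>' / 2) (d / 2)"
  have "u y < u z + \<theta>" if "dist y z = \<delta>" for y
  proof -
    have "y \<in> U"
      using that ball \<open>0 < d\<close> by (auto simp: \<delta>_def dist_commute)
    moreover have "dist y z < \<delta>'"
      using that \<open>0 < \<delta>'\<close> by (simp add: \<delta>_def)
    ultimately have "dist (u y) (u z) < \<theta>"
      using \<delta>' by blast
    then show ?thesis
      by (simp add: dist_real_def)
  qed
  moreover have "0 < \<delta>" "\<delta> < d"
    using \<open>0 < \<delta>'\<close> \<open>0 < d\<close> by (auto simp: \<delta>_def)
  ultimately show ?thesis
    by blast
qed

lemma small_regularisation:
  fixes b \<theta> c \<rho> K :: real
  assumes "0 < \<theta>" "2 * K * \<rho> < b" "0 < c" "0 \<le> \<rho>"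
  shows "\<exists>\<sigma>>0. b * \<sigma> < \<theta> \<and> 2 * K * sqrt (\<rho>\<^sup>2 + \<sigma>\<^sup>2) < b \<and> b * \<sigma>\<^sup>2 < c"
proof -
  have lim: "((\<lambda>\<sigma>. b * \<sigma>) \<longlongrightarrow> 0) (at_right 0)" "((\<lambda>\<sigma>. b * \<sigma>\<^sup>2) \<longlongrightarrow> 0) (at_right 0)"
    "((\<lambda>\<sigma>. 2 * K * sqrt (\<rho>\<^sup>2 + \<sigma>\<^sup>2)) \<longlongrightarrow> 2 * K * \<rho>) (at_right 0)"
    using assms by (auto intro!: tendsto_eq_intros)
  have "\<forall>\<^sub>F \<sigma> in at_right 0. 0 < \<sigma> \<and> b * \<sigma> < \<theta> \<and> 2 * K * sqrt (\<rho>\<^sup>2 + \<sigma>\<^sup>2) < b \<and> b * \<sigma>\<^sup>2 < c"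
    using eventually_at_right_less order_tendstoD(2)[OF lim(1) assms(1)]
      order_tendstoD(2)[OF lim(3) assms(2)] order_tendstoD(2)[OF lim(2) assms(3)]
    by (intro eventually_conj)
  then show ?thesis
    using eventually_happens'[OF trivial_limit_at_right_real] by blast
qed

lemma lifted_cone_above_on_spheres:
  fixes u :: "'a::euclidean_space \<Rightarrow> real"
  assumes "0 < b" "0 \<le> e" "K * \<delta> \<le> b" "0 < \<theta>" "0 \<le> \<delta>"
    and near: "\<forall>y. dist y z = \<delta> \<longrightarrow> u y < u z + \<theta>"
    and sphere: "\<forall>y\<in>sphere z \<rho>. u y \<le> u z + b * \<rho> - K * \<rho>\<^sup>2"
    and y: "dist y z = \<delta> \<or> dist y z = \<rho>"
  shows "u y \<le> reg_cone (u z + \<theta>) b K e z y"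
proof -
  have rad: "u z + \<theta> + b * dist y z - K * (dist y z)\<^sup>2 \<le> reg_cone (u z + \<theta>) b K e z y"
    using reg_cone_bounds(1)[of b e] assms(1,2) by simp
  show ?thesis
    using y
  proof
    assume y: "dist y z = \<delta>"
    have "K * \<delta>\<^sup>2 \<le> b * \<delta>"
      using assms(3,5) by (simp add: power2_eq_square mult_right_mono flip: mult.assoc)
    moreover have "u y < u z + \<theta>"
      using near y by blast
    ultimately show ?thesis
      using rad y by simp
  next
    assume y: "dist y z = \<rho>"
    then have "u y \<le> u z + b * \<rho> - K * \<rho>\<^sup>2"
      using sphere by (simp add: dist_commute)
    then show ?thesis
      using rad y \<open>0 < \<theta>\<close> by simp
  qed
qed

(* If it failed at x by 3 theta, the
   regularised cone lifted by theta would lie above u on a small sphere around z and on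
   the outer sphere, but not at x, contradicting the annulus comparison. *)
lemma comparison_with_cones_from_above:
  fixes u :: "'a::euclidean_space \<Rightarrow> real"
  assumes sub: "cone_subsolution U u M" and cont: "continuous_on U u"
    and K: "M < 2 * K" "0 < K" and ball: "cball z \<rho> \<subseteq> U" and steep: "2 * K * \<rho> < b"
    and sphere: "\<forall>y\<in>sphere z \<rho>. u y \<le> u z + b * \<rho> - K * \<rho>\<^sup>2"
    and x: "x \<in> cball z \<rho>"
  shows "u x \<le> u z + b * dist x z - K * (dist x z)\<^sup>2"
proof (rule ccontr)
  assume above: "\<not> u x \<le> u z + b * dist x z - K * (dist x z)\<^sup>2"
  define d where "d = dist x z"
  define \<theta> where "\<theta> = (u x - (u z + b * d - K * d\<^sup>2)) / 3"
  have \<theta>: "0 < \<theta>" and ux: "u x = u z + b * d - K * d\<^sup>2 + 3 * \<theta>"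
    using above by (simp_all add: \<theta>_def d_def field_simps)
  have "d \<noteq> \<rho>"
  proof
    assume "d = \<rho>"
    then have "u x \<le> u z + b * d - K * d\<^sup>2"
      using sphere by (simp add: d_def dist_commute)
    then show False
      using ux \<theta> by simp
  qed
  moreover have "d \<noteq> 0"
    using ux \<theta> by (auto simp: d_def)
  ultimately have d: "0 < d" "d < \<rho>"
    using x by (auto simp: d_def dist_commute)
  have "K * d \<le> K * \<rho>" "0 < K * d"
    using K d by simp_all
  then have "0 < b" "K * d \<le> b"
    using steep by linarith+
  have "cball z d \<subseteq> U"
    using subset_cball[of d \<rho> z] d ball by simp
  then obtain \<delta> where \<delta>: "0 < \<delta>" "\<delta> < d" and near: "\<forall>y. dist y z = \<delta> \<longrightarrow> u y < u z + \<theta>"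
    using small_sphere_below[OF cont _ d(1) \<theta>] by blast
  have "0 < (2 * K - M) * \<delta>^3" "0 \<le> \<rho>"
    using K \<delta> d by simp_all
  then obtain \<sigma> where \<sigma>: "0 < \<sigma>" "b * \<sigma> < \<theta>" "2 * K * sqrt (\<rho>\<^sup>2 + \<sigma>\<^sup>2) < b"
      "b * \<sigma>\<^sup>2 < (2 * K - M) * \<delta>^3"
    using small_regularisation[OF \<theta> steep] by blast
  define a where "a = u z + \<theta>"
  have boundary: "u y \<le> reg_cone a b K (\<sigma>\<^sup>2) z y" if "dist y z = \<delta> \<or> dist y z = \<rho>" for y
  proof (rule lifted_cone_above_on_spheres[OF \<open>0 < b\<close> _ _ \<theta> _ near sphere that, folded a_def])
    show "K * \<delta> \<le> b"
      using \<open>K * d \<le> b\<close> \<delta> K by (smt (verit) mult_left_mono)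
  qed (use \<delta> in simp_all)
  have "0 \<le> K" "0 < \<sigma>\<^sup>2" "\<delta> \<le> dist x z" "dist x z \<le> \<rho>"
    using K \<sigma> \<delta> d by (simp_all add: d_def)
  then have "u x \<le> reg_cone a b K (\<sigma>\<^sup>2) z x"
    using cone_comparison_on_annulus[OF sub cont ball \<delta>(1) _ _ \<open>0 < b\<close> \<sigma>(3,4)] boundary
    by blast
  also have "\<dots> \<le> a + b * (d + \<sigma>) - K * d\<^sup>2"
    using reg_cone_bounds(2)[of b "\<sigma>\<^sup>2"] \<open>0 < b\<close> \<sigma> by (simp add: d_def)
  finally show False
    using ux \<sigma>(2) \<theta> by (simp add: a_def algebra_simps)
qed

lemma S_plus_sphere:
  fixes u :: "'a::euclidean_space \<Rightarrow> real"
  assumes cont: "continuous_on (sphere z r) u" and r: "0 < r"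
  shows "\<forall>x\<in>sphere z r. u x \<le> u z + r * S_plus u z r"
    and "\<exists>x\<in>sphere z r. u x = u z + r * S_plus u z r"
proof -
  have ne: "sphere z r \<noteq> {}"
    using r by simp
  obtain x1 where x1: "x1 \<in> sphere z r" "\<forall>x\<in>sphere z r. u x \<le> u x1"
    using continuous_attains_sup[OF compact_sphere ne cont] by blast
  then have "(SUP x\<in>sphere z r. u x) = u x1"
    by (intro antisym cSUP_least[OF ne] cSUP_upper bdd_aboveI2[of _ _ "u x1"]) auto
  moreover have "u z + r * S_plus u z r = (SUP x\<in>sphere z r. u x)"
    using r by (simp add: S_plus_def)
  ultimately show "\<forall>x\<in>sphere z r. u x \<le> u z + r * S_plus u z r"
    and "\<exists>x\<in>sphere z r. u x = u z + r * S_plus u z r"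
    using x1 by auto
qed

(* u cannot lie strictly below the paraboloid u(z) - K |x - z|^2 on a whole sphere: otherwise
   u + K |x - z|^2 would have an interior maximum, where the test gives -2K >= -M. *)
lemma sphere_point_above_paraboloid:
  fixes u :: "'a::euclidean_space \<Rightarrow> real"
  assumes sub: "cone_subsolution U u M" and cont: "continuous_on U u"
    and K: "M < 2 * K" "0 < K" and ball: "cball z r \<subseteq> U" and r: "0 < r"
  shows "\<exists>x\<in>sphere z r. u z - K * r\<^sup>2 \<le> u x"
proof (rule ccontr)
  assume "\<not> ?thesis"
  then have below: "\<forall>x\<in>sphere z r. u x < u z - K * r\<^sup>2"
    by auto
  define f where "f = (\<lambda>x. u x - reg_cone (u z) 0 K 1 z x)"
  have f: "f x = u x - u z + K * (dist x z)\<^sup>2" for x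
    by (simp add: f_def reg_cone_dist)
  have "continuous_on (cball z r) f"
    unfolding f_def using ball C2_reg_cone[of 1 "cball z r" "u z" 0 K z]
    by (intro continuous_on_diff continuous_on_subset[OF cont])
       (auto simp: numeral_2_eq_2 differentiable_imp_continuous_on)
  moreover have "\<forall>x\<in>cball z r - ball z r. f x < f z"
  proof
    fix x assume "x \<in> cball z r - ball z r"
    then have "x \<in> sphere z r" "dist x z = r"
      by (auto simp: dist_commute)
    then have "u x < u z - K * r\<^sup>2"
      using below by blast
    then show "f x < f z"
      using \<open>dist x z = r\<close> by (simp add: f)
  qed
  moreover have "z \<in> cball z r" "ball z r \<subseteq> U"
    using r ball by auto
  ultimately obtain p where "local_max_on U f p"
    using local_max_in_open_part[OF compact_cball _ _ open_ball ball_subset_cball] by blast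
  moreover have "cone_slope 0 K 1 z p \<noteq> 0"
    using K by (simp add: cone_slope_def)
  ultimately have "- M \<le> 0 * 1 / (cone_rad 1 z p)^3 - 2 * K"
    using sub[unfolded cone_subsolution_def, rule_format, of 1 p z 0 K "u z"]
    unfolding f_def by simp
  then show False
    using K by simp
qed

lemma S_plus_lower_bound:
  fixes u :: "'a::euclidean_space \<Rightarrow> real"
  assumes sub: "cone_subsolution U u M" and cont: "continuous_on U u"
    and K: "M < 2 * K" "0 < K" and ball: "cball z r \<subseteq> U" and r: "0 < r"
  shows "- K * r \<le> S_plus u z r"
proof -
  obtain x where x: "x \<in> sphere z r" "u z - K * r\<^sup>2 \<le> u x"
    using sphere_point_above_paraboloid[OF sub cont K ball r] by blast
  have "continuous_on (sphere z r) u"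
    using cont ball sphere_cball continuous_on_subset by blast
  then have "u x \<le> u z + r * S_plus u z r"
    using S_plus_sphere(1)[OF _ r] x(1) by blast
  then have "r * (- K * r) \<le> r * S_plus u z r"
    using x(2) by (simp add: power2_eq_square algebra_simps)
  then show ?thesis
    using r by (simp only: mult_le_cancel_left_pos)
qed

lemma S_plus_almost_monotone:
  fixes u :: "'a::euclidean_space \<Rightarrow> real"
  assumes sub: "cone_subsolution U u M" and cont: "continuous_on U u"
    and K: "M < 2 * K" "0 < K" and ball: "cball z s \<subseteq> U" and r: "0 < r" "r < s"
  shows "S_plus u z r \<le> S_plus u z s + 3 * K * s"
proof (rule dense_ge)
  fix b assume b: "S_plus u z s + 3 * K * s < b"
  have s: "0 < s"
    using r by simp
  have "- K * s \<le> S_plus u z s"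
    using S_plus_lower_bound[OF sub cont K ball s] .
  then have steep: "2 * K * s < b"
    using b by linarith
  have cont_sphere: "continuous_on (sphere z t) u" if "t \<le> s" for t
  proof -
    have "sphere z t \<subseteq> U"
      using that ball by auto
    then show ?thesis
      using cont continuous_on_subset by blast
  qed
  have sphere: "\<forall>y\<in>sphere z s. u y \<le> u z + b * s - K * s\<^sup>2"
  proof
    fix y assume "y \<in> sphere z s"
    then have "u y \<le> u z + s * S_plus u z s"
      using S_plus_sphere(1)[OF cont_sphere s] by blast
    also have "s * S_plus u z s \<le> s * (b - 3 * K * s)"
      using b s by simp
    finally have "u y \<le> u z + b * s - 3 * (K * s\<^sup>2)"
      by (simp add: power2_eq_square algebra_simps)
    moreover have "0 \<le> K * s\<^sup>2"
      using K by simp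
    ultimately show "u y \<le> u z + b * s - K * s\<^sup>2"
      by linarith
  qed
  obtain x where x: "x \<in> sphere z r" "u x = u z + r * S_plus u z r"
    using S_plus_sphere(2)[OF cont_sphere r(1)] r by auto
  then have "u x \<le> u z + b * dist x z - K * (dist x z)\<^sup>2"
    using r by (intro comparison_with_cones_from_above[OF sub cont K ball steep sphere]) auto
  moreover have "dist x z = r"
    using x by (simp add: dist_commute)
  moreover have "0 \<le> K * r\<^sup>2"
    using K by simp
  ultimately have "r * S_plus u z r \<le> r * b"
    using x by (simp add: mult.commute)
  then show "S_plus u z r \<le> b"
    using r by simp
qed

lemma upper_bound_on_cball:
  fixes u :: "'a::euclidean_space \<Rightarrow> real"
  assumes sub: "cone_subsolution U u M" and cont: "continuous_on U u"
    and K: "M < 2 * K" "0 < K" and ball: "cball y \<rho> \<subseteq> U" and "0 < \<rho>" and w: "w \<in> cball y \<rho>"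
  shows "u w \<le> u y + \<rho> * (S_plus u y \<rho> + 3 * K * \<rho>)"
proof -
  define d where "d = dist w y"
  have nonneg: "0 \<le> S_plus u y \<rho> + 3 * K * \<rho>"
    using S_plus_lower_bound[OF sub cont K ball \<open>0 < \<rho>\<close>] mult_pos_pos[OF K(2) \<open>0 < \<rho>\<close>]
    by linarith
  show ?thesis
  proof (cases "d = 0")
    case True
    then show ?thesis
      using nonneg \<open>0 < \<rho>\<close> by (simp add: d_def)
  next
    case False
    then have d: "0 < d" "d \<le> \<rho>"
      using w by (auto simp: d_def dist_commute)
    then have "sphere y d \<subseteq> U"
      using ball by auto
    then have cont_d: "continuous_on (sphere y d) u"
      using cont continuous_on_subset by blast
    have "S_plus u y d \<le> S_plus u y \<rho> + 3 * K * \<rho>"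
    proof (cases "d = \<rho>")
      case True
      then show ?thesis
        using K d by simp
    next
      case False
      then show ?thesis
        using S_plus_almost_monotone[OF sub cont K ball d(1)] d by simp
    qed
    then have "d * S_plus u y d \<le> \<rho> * (S_plus u y \<rho> + 3 * K * \<rho>)"
      using d nonneg by (meson mult_left_mono mult_right_mono order_trans less_imp_le)
    moreover have "w \<in> sphere y d"
      by (simp add: d_def dist_commute)
    then have "u w \<le> u y + d * S_plus u y d"
      using S_plus_sphere(1)[OF cont_d d(1)] by blast
    ultimately show ?thesis
      by linarith
  qed
qed

lemma almost_monotone_has_limit:
  fixes h :: "real \<Rightarrow> real"
  assumes R: "0 < R" and C: "0 \<le> C"
    and below: "\<And>r. 0 < r \<Longrightarrow> r \<le> R \<Longrightarrow> m \<le> h r"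
    and almost_mono: "\<And>r s. 0 < r \<Longrightarrow> r < s \<Longrightarrow> s \<le> R \<Longrightarrow> h r \<le> h s + C * s"
  shows "\<exists>L. (h \<longlongrightarrow> L) (at_right 0)"
proof
  define A where "A = (\<lambda>s. h s + C * s) ` {0<..R}"
  have "A \<noteq> {}"
    using R by (simp add: A_def)
  have "bdd_below A"
  proof (rule bdd_belowI)
    fix x assume "x \<in> A"
    then obtain s where "0 < s" "s \<le> R" "x = h s + C * s"
      by (auto simp: A_def)
    then show "m \<le> x"
      using below[of s] C by (simp add: add_increasing2)
  qed
  then have Inf_le: "Inf A \<le> h s + C * s" if "0 < s" "s \<le> R" for s
    using that by (intro cInf_lower) (auto simp: A_def)
  show "(h \<longlongrightarrow> Inf A) (at_right 0)"
  proof (rule tendstoI)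
    fix \<epsilon> :: real assume "0 < \<epsilon>"
    then obtain s0 where s0: "0 < s0" "s0 \<le> R" "h s0 + C * s0 < Inf A + \<epsilon>"
      using cInf_lessD[OF \<open>A \<noteq> {}\<close>, of "Inf A + \<epsilon>"] by (auto simp: A_def)
    have "dist (h r) (Inf A) < \<epsilon>" if r: "0 < r" "r < min s0 (\<epsilon> / (C + 1))" for r
    proof -
      have "h r < Inf A + \<epsilon>"
        using almost_mono[of r s0] r s0 by simp
      moreover have "(C + 1) * r < \<epsilon>"
        using r C by (simp add: pos_less_divide_eq mult.commute)
      then have "C * r < \<epsilon>"
        using r by (simp add: distrib_right)
      then have "Inf A - \<epsilon> < h r"
        using Inf_le[of r] r s0 by simp
      ultimately show ?thesis
        by (simp add: dist_real_def abs_less_iff)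
    qed
    moreover have "0 < min s0 (\<epsilon> / (C + 1))"
      using s0 \<open>0 < \<epsilon>\<close> C by simp
    ultimately show "\<forall>\<^sub>F r in at_right 0. dist (h r) (Inf A) < \<epsilon>"
      unfolding eventually_at_right_field by blast
  qed
qed

lemma S_plus_has_limit:
  fixes u :: "'a::euclidean_space \<Rightarrow> real"
  assumes "open U" and sub: "cone_subsolution U u M" and cont: "continuous_on U u"
    and K: "M < 2 * K" "0 < K" and "y \<in> U"
  shows "\<exists>A. (S_plus u y \<longlongrightarrow> A) (at_right 0)"
proof -
  obtain R where R: "0 < R" "cball y R \<subseteq> U"
    using \<open>open U\<close> \<open>y \<in> U\<close> open_contains_cball by blast
  have ball: "cball y s \<subseteq> U" if "s \<le> R" for s
    using subset_cball[OF that] R(2) by blast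
  show ?thesis
  proof (rule almost_monotone_has_limit[OF R(1)])
    show "0 \<le> 3 * K"
      using K by simp
    show "- K * R \<le> S_plus u y r" if "0 < r" "r \<le> R" for r
    proof -
      have "- K * R \<le> - K * r"
        using K that by simp
      then show ?thesis
        using S_plus_lower_bound[OF sub cont K ball[OF that(2)] that(1)] by linarith
    qed
    show "S_plus u y r \<le> S_plus u y s + 3 * K * s" if "0 < r" "r < s" "s \<le> R" for r s
      using S_plus_almost_monotone[OF sub cont K ball[OF that(3)] that(1,2)] .
  qed
qed

lemma cball_subset_cball_of_sphere:
  fixes y z :: "'a::metric_space"
  assumes "z \<in> sphere y r"
  shows "cball z s \<subseteq> cball y (r + s)"
proof
  fix x assume "x \<in> cball z s"
  then have "dist y z + dist z x \<le> r + s"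
    using assms by simp
  then show "x \<in> cball y (r + s)"
    using dist_triangle[of y x z] by simp
qed

lemma S_plus_uminus_attained:
  fixes u :: "'a::euclidean_space \<Rightarrow> real"
  assumes "continuous_on (sphere y r) u" and "0 < r"
  shows "\<exists>z\<in>sphere y r. u z = u y - r * S_plus (\<lambda>x. - u x) y r"
  using S_plus_sphere(2)[OF continuous_on_minus[OF assms(1)] assms(2)] by force

(* Let z minimise u on the sphere of radius r about y.  Comparing the slope of u at z over
   the radius t r with the slope at y over the radius (t + 1) r gives this estimate. *)
lemma two_scale_estimate:
  fixes u :: "'a::euclidean_space \<Rightarrow> real"
  assumes sub: "cone_subsolution U u M" and cont: "continuous_on U u"
    and K: "M < 2 * K" "0 < K" and ball: "cball y ((t + 1) * r) \<subseteq> U" and t: "1 < t" and r: "0 < r"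
  shows "(t - 1) * S_plus (\<lambda>x. - u x) y r - 3 * K * t\<^sup>2 * r
           \<le> (t + 1) * (S_plus u y ((t + 1) * r) + 3 * K * ((t + 1) * r))"
proof -
  define \<rho> where "\<rho> = (t + 1) * r"
  define Br where "Br = S_plus (\<lambda>x. - u x) y r"
  define Sr where "Sr = S_plus u y \<rho> + 3 * K * \<rho>"
  have "0 < \<rho>" "r \<le> \<rho>"
    using t r by (simp_all add: \<rho>_def)
  then have "sphere y r \<subseteq> U"
    using ball by (auto simp: \<rho>_def)
  then obtain z where z: "z \<in> sphere y r" and uz: "u z = u y - r * Br"
    using S_plus_uminus_attained[OF continuous_on_subset[OF cont] r] unfolding Br_def by blast
  have ball_z: "cball z (t * r) \<subseteq> U"
    using cball_subset_cball_of_sphere[OF z, of "t * r"] ball by (simp add: algebra_simps)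
  then have "sphere z (t * r) \<subseteq> U" "sphere z r \<subseteq> U"
    using t r by auto
  then have "continuous_on (sphere z (t * r)) u" "continuous_on (sphere z r) u"
    using cont continuous_on_subset by blast+
  have "y \<in> sphere z r"
    using z by (simp add: dist_commute)
  then have "u y \<le> u z + r * S_plus u z r"
    using S_plus_sphere(1)[OF \<open>continuous_on (sphere z r) u\<close> r] by blast
  then have "r * Br \<le> r * S_plus u z r"
    using uz by simp
  then have "Br \<le> S_plus u z r"
    using r by simp
  also have "\<dots> \<le> S_plus u z (t * r) + 3 * K * (t * r)"
    using S_plus_almost_monotone[OF sub cont K ball_z r] t r by simp
  finally have slope_z: "Br - 3 * K * (t * r) \<le> S_plus u z (t * r)"
    by simp
  obtain w where w: "w \<in> sphere z (t * r)" "u w = u z + t * r * S_plus u z (t * r)"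
    using S_plus_sphere(2)[OF \<open>continuous_on (sphere z (t * r)) u\<close>] t r by auto
  have "w \<in> cball z (t * r)"
    using w(1) by simp
  then have "w \<in> cball y \<rho>"
    using cball_subset_cball_of_sphere[OF z, of "t * r"] by (auto simp: \<rho>_def algebra_simps)
  then have "u w \<le> u y + \<rho> * Sr"
    using upper_bound_on_cball[OF sub cont K _ \<open>0 < \<rho>\<close>] ball by (simp add: Sr_def \<rho>_def)
  moreover have "u z + t * r * (Br - 3 * K * (t * r)) \<le> u w"
    using w(2) slope_z t r by (simp add: mult_left_mono)
  ultimately have "r * ((t - 1) * Br - 3 * K * t\<^sup>2 * r) \<le> r * ((t + 1) * Sr)"
    unfolding uz by (simp add: \<rho>_def power2_eq_square algebra_simps)
  then show ?thesis
    using r by (simp add: Br_def Sr_def \<rho>_def)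
qed

lemma tendsto_rescaled_at_right:
  fixes f :: "real \<Rightarrow> real"
  assumes "(f \<longlongrightarrow> A) (at_right 0)" and "0 < c"
  shows "((\<lambda>r. f (c * r)) \<longlongrightarrow> A) (at_right 0)"
proof -
  have "((\<lambda>r. c * r) \<longlongrightarrow> 0) (at_right 0)"
    by (auto intro!: tendsto_eq_intros)
  then have "filterlim (\<lambda>r. c * r) (at_right 0) (at_right 0)"
  proof (rule tendsto_imp_filterlim_at_right)
    show "\<forall>\<^sub>F r in at_right 0. 0 < c * r"
      using eventually_at_right_less[of 0] by (rule eventually_mono) (simp add: \<open>0 < c\<close>)
  qed
  then show ?thesis
    using assms(1) filterlim_compose[of f "nhds A" "at_right 0" "\<lambda>r. c * r" "at_right 0"] by blast
qed

(* Letting r -> 0 in the two-scale estimate: (t - 1) B <= (t + 1) A for all t > 1,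
   hence B <= A. *)
lemma limit_S_plus_uminus_le:
  fixes u :: "'a::euclidean_space \<Rightarrow> real"
  assumes "open U" and sub: "cone_subsolution U u M" and cont: "continuous_on U u"
    and K: "M < 2 * K" "0 < K" and "y \<in> U"
    and A: "(S_plus u y \<longlongrightarrow> A) (at_right 0)"
    and B: "(S_plus (\<lambda>x. - u x) y \<longlongrightarrow> B) (at_right 0)"
  shows "B \<le> A"
proof -
  obtain R where R: "0 < R" "cball y R \<subseteq> U"
    using \<open>open U\<close> \<open>y \<in> U\<close> open_contains_cball by blast
  have scaled: "(t - 1) * B \<le> (t + 1) * A" if t: "1 < t" for t
  proof (rule tendsto_le[OF trivial_limit_at_right_real])
    show "((\<lambda>r. (t + 1) * (S_plus u y ((t + 1) * r) + 3 * K * ((t + 1) * r))) \<longlongrightarrow> (t + 1) * A)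
        (at_right 0)"
      using tendsto_rescaled_at_right[OF A, of "t + 1"] t by (auto intro!: tendsto_eq_intros)
    show "((\<lambda>r. (t - 1) * S_plus (\<lambda>x. - u x) y r - 3 * K * t\<^sup>2 * r) \<longlongrightarrow> (t - 1) * B) (at_right 0)"
      using B by (auto intro!: tendsto_eq_intros)
    have "\<forall>\<^sub>F r in at_right 0. 0 < r \<and> (t + 1) * r < R"
      using R t by (intro eventually_conj eventually_at_right_less order_tendstoD(2))
        (auto intro!: tendsto_eq_intros)
    then show "\<forall>\<^sub>F r in at_right 0. (t - 1) * S_plus (\<lambda>x. - u x) y r - 3 * K * t\<^sup>2 * r
        \<le> (t + 1) * (S_plus u y ((t + 1) * r) + 3 * K * ((t + 1) * r))"
    proof eventually_elim
      case (elim r)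
      then have "cball y ((t + 1) * r) \<subseteq> U"
        using subset_cball[of "(t + 1) * r" R y] R by auto
      then show ?case
        using two_scale_estimate[OF sub cont K _ t] elim by blast
    qed
  qed
  show "B \<le> A"
  proof (rule ccontr)
    assume "\<not> B \<le> A"
    define t where "t = max 2 ((A + B) / (B - A) + 1)"
    have "1 < t" "(A + B) / (B - A) < t"
      by (auto simp: t_def)
    then have "A + B < t * (B - A)"
      using \<open>\<not> B \<le> A\<close> by (simp add: pos_divide_less_eq)
    then show False
      using scaled[OF \<open>1 < t\<close>] by (simp add: algebra_simps)
  qed
qed

lemma S_minus_eq_uminus_S_plus: "S_minus u y r = - S_plus (\<lambda>x. - u x) y r"
proof -
  have "(INF x\<in>sphere y r. u x) = - (SUP x\<in>sphere y r. - u x)"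
    by (simp add: Inf_real_def image_image)
  then show ?thesis
    by (simp add: S_minus_def S_plus_def minus_divide_left)
qed

lemma S_plus_S_minus_limits:
  fixes u :: "'a::euclidean_space \<Rightarrow> real"
  assumes U: "open U" and sub: "cone_subsolution U u M" "cone_subsolution U (\<lambda>x. - u x) M"
    and cont: "continuous_on U u" and K: "M < 2 * K" "0 < K" and y: "y \<in> U"
  shows "\<exists>Sp Sm. (S_plus u y \<longlongrightarrow> Sp) (at_right 0) \<and> (S_minus u y \<longlongrightarrow> Sm) (at_right 0)
           \<and> Sp = - Sm"
proof -
  have cont': "continuous_on U (\<lambda>x. - u x)"
    using cont by (rule continuous_on_minus)
  obtain A where A: "(S_plus u y \<longlongrightarrow> A) (at_right 0)"
    using S_plus_has_limit[OF U sub(1) cont K y] by blast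
  obtain B where B: "(S_plus (\<lambda>x. - u x) y \<longlongrightarrow> B) (at_right 0)"
    using S_plus_has_limit[OF U sub(2) cont' K y] by blast
  have "B \<le> A"
    using limit_S_plus_uminus_le[OF U sub(1) cont K y A B] .
  moreover have "A \<le> B"
    using limit_S_plus_uminus_le[OF U sub(2) cont' K y B] A by simp
  moreover have "(S_minus u y \<longlongrightarrow> - B) (at_right 0)"
    unfolding S_minus_eq_uminus_S_plus [abs_def] using B by (rule tendsto_minus)
  ultimately show ?thesis
    using A by (intro exI[of _ A] exI[of _ "- B"]) simp
qed

(* Only openness and boundedness of U and the continuity of u_1, u_2 on its closure (which
   bound u_1 - u_2) are needed. *)
theorem mainTheorem11:
  fixes U :: "'a::euclidean_space set" and u1 u2 :: "'a \<Rightarrow> real"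
  assumes "open U" and "connected U" and "U \<noteq> {}" and "bounded U"
    and "smooth_boundary U"
    and "continuous_on (closure U) u1" and "continuous_on (closure U) u2"
    and "visc_solution U u1 u2"
  shows "\<forall>y\<in>U. \<forall>u\<in>{u1, u2}. \<exists>Sp Sm.
           ((\<lambda>r. S_plus u y r) \<longlongrightarrow> Sp) (at_right 0) \<and>
           ((\<lambda>r. S_minus u y r) \<longlongrightarrow> Sm) (at_right 0) \<and>
           Sp = - Sm"
proof -
  have "compact ((\<lambda>x. u1 x - u2 x) ` closure U)"
    using assms(4,6,7) by (intro compact_continuous_image continuous_on_diff) (auto simp: compact_closure)
  then have "bounded ((\<lambda>x. u1 x - u2 x) ` closure U)"
    by (rule compact_imp_bounded)
  then obtain M where "\<forall>d\<in>(\<lambda>x. u1 x - u2 x) ` closure U. \<bar>d\<bar> \<le> M"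
    unfolding bounded_real by blast
  then have M: "\<forall>x\<in>U. u1 x - u2 x \<le> M" "\<forall>x\<in>U. u2 x - u1 x \<le> M"
    using closure_subset by (fastforce simp: abs_le_iff)+
  define K where "K = \<bar>M\<bar> + 1"
  have K: "M < 2 * K" "0 < K"
    by (simp_all add: K_def)
  have visc: "visc_sub_comp U u1 u2" "visc_sub_comp U u2 u1"
    "visc_super_comp U u1 u2" "visc_super_comp U u2 u1"
    using assms(8) by (auto simp: visc_solution_def visc_subsolution_def visc_supersolution_def)
  have "continuous_on U u1" "continuous_on U u2"
    using assms(6,7) closure_subset continuous_on_subset by blast+
  moreover have "cone_subsolution U u1 M" "cone_subsolution U (\<lambda>x. - u1 x) M"
    "cone_subsolution U u2 M" "cone_subsolution U (\<lambda>x. - u2 x) M"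
    using cone_subsolution_if_visc_sub_comp[OF visc(1) M(2)] cone_subsolution_if_visc_sub_comp[OF visc(2) M(1)]
      cone_subsolution_if_visc_super_comp[OF visc(3) M(1)] cone_subsolution_if_visc_super_comp[OF visc(4) M(2)]
    by blast+
  ultimately show ?thesis
    using S_plus_S_minus_limits[OF assms(1) _ _ _ K] by blast
qed

end
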